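(* Let $\ast$ be a composition on $\mathbb{L}$ that admits Taylor expansion, i.e., for all $f,g,h\in\mathbb{L}$ with $g>\mathbb{R}$ and $h\prec g$ the sum $\sum_{n=0}^\infty\frac{f^{(n)}\ast g}{n!}h^n$ exists and equals $f\ast(g+h)$. Then $\ast$ obeys the chain rule: $(f\ast g)'=(f'\ast g)\cdot g'$ for all $f,g\in\mathbb{L}$ with $g>\mathbb{R}$.
   Context: Fix distinct symbols $\ell_\alpha$ for all ordinals $\alpha$. Exponent sequences $r=(r_\beta)$ are families of reals over all ordinals, zero beyond some ordinal; monomials $\ell^r=\prod_\beta\ell_\beta^{r_\beta}$ form a group $\mathfrak{L}$ ($\ell^r\ell^s=\ell^{r+s}$), ordered by $\ell^r\prec\ell^s$ iff $r\ne s$ and $r_\beta<s_\beta$ at the least differing $\beta$; $\ell_\alpha$ is the monomial with exponent $1$ at $\alpha$ and $0$ elsewhere, $x:=\ell_0$. With $\sigma(\ell^r)=\{\beta:r_\beta\neq0\}$, $\mathfrak{L}_{<\alpha}=\{\mathfrak{m}:\sigma(\mathfrak{m})\subseteq\alpha\}$, $\mathbb{L}_{<\alpha}=\mathbb{R}[[\mathfrak{L}_{<\alpha}]]$ is the Hahn field of series with well-based support (no infinite strictly increasing sequence), ordered by the sign of the leading coefficient, and $\mathbb{L}=\bigcup_\alpha\mathbb{L}_{<\alpha}$. $f\prec g$ means $\mathfrak{d}(f)\prec\mathfrak{d}(g)$, where $\mathfrak{d}$ is the largest monomial of the support ($\mathfrak{d}(0)=0$, below all monomials). $g>\mathbb{R}$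 means $g>c$ for all real $c$; $\mathbb{L}^{>\mathbb{R}}$ is the class of such $g$. Summable families: all members in one $\mathbb{L}_{<\alpha}$, union of supports well-based, each monomial in finitely many supports; sums coefficientwise. Logarithm: $\log\ell^r=\sum r_\beta\ell_{\beta+1}$ and $\log(c\,\mathfrak{d}(f)(1+\epsilon))=\log\mathfrak{d}(f)+\log c+\sum_{n\ge1}\frac{(-1)^{n-1}}{n}\epsilon^n$ for $c\in\mathbb{R}^{>0}$, $\epsilon\prec1$. $f'$, $f^{(n)}$ refer to the unique $\mathbb{R}$-linear derivation on $\mathbb{L}$ with $\ell_\alpha'=\prod_{\beta<\alpha}\ell_\beta^{-1}$ commuting with sums of summable families. A composition on $\mathbb{L}$ is a map $\ast:\mathbb{L}\times\mathbb{L}^{>\mathbb{R}}\to\mathbb{L}$ such that (CL1) each $f\mapsto f\ast g$ is an $\mathbb{R}$-algebra endomorphism; (CL2) $f\ast x=f$, $x\ast g=g$; (CL3) $\log(f\ast g)=(\log f)\ast g$ for $f>0$; (CL4) $f\mapsto f\ast g$ maps summable families to summable families and commutes with their sums; (CL5) $(f\ast g)\ast h=f\ast(g\ast h)$. *)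

theory Defs
  imports Complex_Main
begin

text \<open>Logarithmic hyperseries over the ordinals of a well-ordered type 'o.
  Exponent sequences are functions 'o to real; a series is its coefficient
  function on exponent sequences (monomials).\<close>

type_synonym 'o lexp = "'o \<Rightarrow> real"
type_synonym 'o ser = "'o lexp \<Rightarrow> real"

definition mless :: "'o::wellorder lexp \<Rightarrow> 'o lexp \<Rightarrow> bool" where
  "mless r s \<longleftrightarrow> r \<noteq> s \<and> r (LEAST b. r b \<noteq> s b) < s (LEAST b. r b \<noteq> s b)"

definition supp :: "'o ser \<Rightarrow> 'o lexp set" where
  "supp f = {r. f r \<noteq> 0}"

definition wellbased :: "'o::wellorder lexp set \<Rightarrow> bool" where
  "wellbased S \<longleftrightarrow> \<not> (\<exists>s::nat \<Rightarrow> 'o lexp. \<forall>n. s n \<in> S \<and> mless (s n) (s (Suc n)))"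

definition expbelow :: "'o::wellorder \<Rightarrow> 'o lexp \<Rightarrow> bool" where
  "expbelow a r \<longleftrightarrow> (\<forall>b. r b \<noteq> 0 \<longrightarrow> b < a)"

definition inLlt :: "'o::wellorder \<Rightarrow> 'o ser \<Rightarrow> bool" where
  "inLlt a f \<longleftrightarrow> supp f \<subseteq> {r. expbelow a r} \<and> wellbased (supp f)"

definition inL :: "'o::wellorder ser \<Rightarrow> bool" where
  "inL f \<longleftrightarrow> (\<exists>a. inLlt a f)"

definition summable_fam :: "('i \<Rightarrow> 'o::wellorder ser) \<Rightarrow> bool" where
  "summable_fam F \<longleftrightarrow> (\<exists>a. \<forall>i. supp (F i) \<subseteq> {r. expbelow a r})
      \<and> wellbased (\<Union>i. supp (F i)) \<and> (\<forall>m. finite {i. F i m \<noteq> 0})"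

definition fsum :: "('i \<Rightarrow> 'o ser) \<Rightarrow> 'o ser" where
  "fsum F = (\<lambda>m. sum (\<lambda>i. F i m) {i. F i m \<noteq> 0})"

definition smono :: "'o lexp \<Rightarrow> 'o ser" where
  "smono r = (\<lambda>m. if m = r then 1 else 0)"

definition sconst :: "real \<Rightarrow> 'o ser" where
  "sconst c = (\<lambda>m. if m = (\<lambda>_. 0) then c else 0)"

definition sadd :: "'o ser \<Rightarrow> 'o ser \<Rightarrow> 'o ser" where
  "sadd f g = (\<lambda>m. f m + g m)"

definition sscale :: "real \<Rightarrow> 'o ser \<Rightarrow> 'o ser" where
  "sscale c f = (\<lambda>m. c * f m)"

definition ssub :: "'o ser \<Rightarrow> 'o ser \<Rightarrow> 'o ser" where
  "ssub f g = (\<lambda>m. f m - g m)"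

text \<open>Cauchy product (the index set is finite for well-based supports)\<close>
definition smult :: "'o ser \<Rightarrow> 'o ser \<Rightarrow> 'o ser" where
  "smult f g = (\<lambda>m. sum (\<lambda>a. f a * g (\<lambda>b. m b - a b))
                     {a. f a \<noteq> 0 \<and> g (\<lambda>b. m b - a b) \<noteq> 0})"

definition spow :: "'o ser \<Rightarrow> nat \<Rightarrow> 'o ser" where
  "spow f n = (smult f ^^ n) (sconst 1)"

definition ell :: "'o \<Rightarrow> 'o ser" where
  "ell a = smono (\<lambda>b. if b = a then 1 else 0)"

definition xL :: "'o::wellorder ser" where
  "xL = ell (LEAST b. True)"

text \<open>exponent of the dominant monomial d(f) (meaningful for nonzero well-based f)\<close>
definition dexp :: "'o::wellorder ser \<Rightarrow> 'o lexp" where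
  "dexp f = (THE r. f r \<noteq> 0 \<and> (\<forall>s. f s \<noteq> 0 \<longrightarrow> s = r \<or> mless s r))"

text \<open>f \<prec> g, with d(0) = 0 below all monomials\<close>
definition sprec :: "'o::wellorder ser \<Rightarrow> 'o ser \<Rightarrow> bool" where
  "sprec f g \<longleftrightarrow> g \<noteq> (\<lambda>_. 0) \<and> (f = (\<lambda>_. 0) \<or> mless (dexp f) (dexp g))"

definition spos :: "'o::wellorder ser \<Rightarrow> bool" where
  "spos f \<longleftrightarrow> f \<noteq> (\<lambda>_. 0) \<and> f (dexp f) > 0"

definition sgtR :: "'o::wellorder ser \<Rightarrow> bool" where
  "sgtR g \<longleftrightarrow> (\<forall>c. spos (ssub g (sconst c)))"

definition osucc :: "'o::wellorder \<Rightarrow> 'o" where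
  "osucc b = (LEAST c. b < c)"

definition slog :: "'o::wellorder ser \<Rightarrow> 'o ser" where
  "slog f = (let r = dexp f; c = f r;
              eps = ssub (sscale (1 / c) (smult f (smono (\<lambda>b. - r b)))) (sconst 1)
           in sadd (sadd (fsum (\<lambda>b. sscale (r b) (ell (osucc b)))) (sconst (ln c)))
                   (fsum (\<lambda>n::nat. if n = 0 then (\<lambda>_. 0)
                          else sscale ((-1) ^ (n - 1) / real n) (spow eps n))))"

definition der :: "'o::wellorder ser \<Rightarrow> 'o ser" where
  "der f = fsum (\<lambda>(r, b). sscale (f r * r b) (smono (\<lambda>c. r c - (if c \<le> b then 1 else 0))))"

text \<open>Axioms CL1--CL5 (summable families indexed by nat \<times> monomials, which
  suffices since any summable family has at most that many nonzero members).\<close>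
definition composition :: "('o::wellorder ser \<Rightarrow> 'o ser \<Rightarrow> 'o ser) \<Rightarrow> bool" where
  "composition cmp \<longleftrightarrow>
    (\<forall>g. inL g \<and> sgtR g \<longrightarrow>
        (\<forall>f. inL f \<longrightarrow> inL (cmp f g))
      \<and> (\<forall>f h. inL f \<and> inL h \<longrightarrow> cmp (sadd f h) g = sadd (cmp f g) (cmp h g))
      \<and> (\<forall>f h. inL f \<and> inL h \<longrightarrow> cmp (smult f h) g = smult (cmp f g) (cmp h g))
      \<and> (\<forall>c f. inL f \<longrightarrow> cmp (sscale c f) g = sscale c (cmp f g))
      \<and> cmp (sconst 1) g = sconst 1)
  \<and> (\<forall>f. inL f \<longrightarrow> cmp f xL = f)
  \<and> (\<forall>g. inL g \<and> sgtR g \<longrightarrow> cmp xL g = g)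
  \<and> (\<forall>f g. inL f \<and> spos f \<and> inL g \<and> sgtR g \<longrightarrow> slog (cmp f g) = cmp (slog f) g)
  \<and> (\<forall>g (F :: nat \<times> 'o lexp \<Rightarrow> 'o ser). inL g \<and> sgtR g \<and> summable_fam F \<longrightarrow>
        summable_fam (\<lambda>i. cmp (F i) g) \<and> fsum (\<lambda>i. cmp (F i) g) = cmp (fsum F) g)
  \<and> (\<forall>f g h. inL f \<and> inL g \<and> sgtR g \<and> inL h \<and> sgtR h \<longrightarrow>
        cmp (cmp f g) h = cmp f (cmp g h))"

definition admits_taylor :: "('o::wellorder ser \<Rightarrow> 'o ser \<Rightarrow> 'o ser) \<Rightarrow> bool" where
  "admits_taylor cmp \<longleftrightarrow>
    (\<forall>f g h. inL f \<and> inL g \<and> sgtR g \<and> inL h \<and> sprec h g \<longrightarrow>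
       (let F = (\<lambda>n::nat. sscale (1 / fact n) (smult (cmp ((der ^^ n) f) g) (spow h n)))
        in summable_fam F \<and> fsum F = cmp f (sadd g h)))"

end

theory Submission
  imports Defs "HOL-Library.Function_Algebras"
begin

text \<open>Fix a coefficient m and pick a monomial \<open>\<epsilon> = \<ell>^e\<close> so small that only first-order
  Taylor terms reach the monomials compared below. With \<open>\<delta> = g \<circ> (x + \<epsilon>) - g\<close>,
  associativity gives \<open>(f \<circ> g) \<circ> (x + \<epsilon>) = f \<circ> (g + \<delta>)\<close>. Expanding the left side
  by Taylor at x and the right side by Taylor at g and comparing coefficients at \<open>m + e\<close>,
  the zeroth-order terms agree and all terms of order at least 2 vanish, because the supports
  of all derivatives of f composed with g lie below a single monomial: the Taylor family for
  the increment 1 is summable, so the union of these supports is well-based. What is left is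
  \<open>(f \<circ> g)'\<close> at m on the left and \<open>(f' \<circ> g) \<cdot> \<delta>\<close> at \<open>m + e\<close> on the right, and at the
  relevant monomials \<open>\<delta>\<close> agrees with \<open>g' \<cdot> \<epsilon>\<close>.\<close>

definition mle :: "'o::wellorder lexp \<Rightarrow> 'o lexp \<Rightarrow> bool" where
  "mle r s \<longleftrightarrow> r = s \<or> mless r s"

lemma mless_iff_first_difference:
  "mless r s \<longleftrightarrow> (\<exists>k. r k < s k \<and> (\<forall>c<k. r c = s c))"
proof
  assume "mless r s"
  let ?k = "LEAST b. r b \<noteq> s b"
  have "r ?k < s ?k" using \<open>mless r s\<close> by (simp add: mless_def)
  moreover have "\<forall>c<?k. r c = s c" using not_less_Least by blast
  ultimately show "\<exists>k. r k < s k \<and> (\<forall>c<k. r c = s c)" by blast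
next
  assume "\<exists>k. r k < s k \<and> (\<forall>c<k. r c = s c)"
  then obtain k where k: "r k < s k" "\<forall>c<k. r c = s c" by blast
  have "(LEAST b. r b \<noteq> s b) = k"
    by (rule Least_equality) (use k in \<open>auto simp: not_less[symmetric]\<close>)
  with k show "mless r s" by (auto simp: mless_def)
qed

lemma mless_irrefl: "\<not> mless r r"
  by (simp add: mless_def)

lemma mless_asym:
  assumes "mless r s" shows "\<not> mless s r"
proof
  assume "mless s r"
  obtain k k' where "r k < s k" "\<forall>c<k. r c = s c" "s k' < r k'" "\<forall>c<k'. s c = r c"
    using \<open>mless r s\<close> \<open>mless s r\<close> by (auto simp: mless_iff_first_difference)
  then show False by (cases k k' rule: linorder_cases) auto
qed

lemma mless_trans:
  assumes "mless r s" "mless s u" shows "mless r u"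
proof -
  obtain k k' where "r k < s k" "\<forall>c<k. r c = s c" "s k' < u k'" "\<forall>c<k'. s c = u c"
    using assms by (auto simp: mless_iff_first_difference)
  then have "r (min k k') < u (min k k') \<and> (\<forall>c<min k k'. r c = u c)"
    by (cases k k' rule: linorder_cases) auto
  then show ?thesis by (auto simp: mless_iff_first_difference)
qed

lemma mless_linear: "r = s \<or> mless r s \<or> mless s r"
proof (cases "r = s")
  case False
  then have "\<exists>b. r b \<noteq> s b" by (auto simp: fun_eq_iff)
  then have "r (LEAST b. r b \<noteq> s b) \<noteq> s (LEAST b. r b \<noteq> s b)" by (rule LeastI_ex)
  moreover have "(\<lambda>b. s b \<noteq> r b) = (\<lambda>b. r b \<noteq> s b)" by auto
  ultimately show ?thesis by (auto simp: mless_def)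
qed simp

lemma mless_add_left_iff: "mless (c + r) (c + s) \<longleftrightarrow> mless r s"
  by (simp add: mless_iff_first_difference)

interpretation lex: linordered_ab_group_add "(+)" "0 :: 'o::wellorder lexp" "(-)" uminus mle mless
proof unfold_locales
  fix r s u c :: "'o lexp"
  show "mless r s \<longleftrightarrow> mle r s \<and> \<not> mle s r"
    using mless_asym mless_irrefl by (auto simp: mle_def)
  show "mle r r" by (simp add: mle_def)
  show "mle r s \<Longrightarrow> mle s u \<Longrightarrow> mle r u"
    using mless_trans by (auto simp: mle_def)
  show "mle r s \<Longrightarrow> mle s r \<Longrightarrow> r = s"
    using mless_asym by (auto simp: mle_def)
  show "mle r s \<Longrightarrow> mle (c + r) (c + s)"
    by (auto simp: mle_def mless_add_left_iff)
  show "mle r s \<or> mle s r"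
    using mless_linear by (auto simp: mle_def)
qed

declare lex.order_trans [trans]

lemma mless_if_same_diff: "b - a = d - c \<Longrightarrow> mless c d \<Longrightarrow> mless a b"
  by (metis lex.diff_gt_0_iff_gt)

lemma wellbased_iff_max:
  "wellbased S \<longleftrightarrow> (\<forall>Y\<subseteq>S. Y \<noteq> {} \<longrightarrow> (\<exists>M\<in>Y. \<forall>s\<in>Y. mle s M))"
proof
  assume wb: "wellbased S"
  show "\<forall>Y\<subseteq>S. Y \<noteq> {} \<longrightarrow> (\<exists>M\<in>Y. \<forall>s\<in>Y. mle s M)"
  proof (intro allI impI, rule ccontr)
    fix Y assume Y: "Y \<subseteq> S" "Y \<noteq> {}" and "\<not> (\<exists>M\<in>Y. \<forall>s\<in>Y. mle s M)"
    then obtain next_up where up: "\<forall>M\<in>Y. next_up M \<in> Y \<and> mless M (next_up M)"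
      using lex.not_le by metis
    obtain y where "y \<in> Y" using Y(2) by blast
    define chain where "chain n = (next_up ^^ n) y" for n
    have "chain n \<in> Y" for n by (induction n) (auto simp: chain_def \<open>y \<in> Y\<close> up)
    then have "\<forall>n. chain n \<in> S \<and> mless (chain n) (chain (Suc n))"
      using Y(1) up by (auto simp: chain_def)
    then show False using wb by (auto simp: wellbased_def)
  qed
next
  assume max: "\<forall>Y\<subseteq>S. Y \<noteq> {} \<longrightarrow> (\<exists>M\<in>Y. \<forall>s\<in>Y. mle s M)"
  show "wellbased S"
    unfolding wellbased_def
  proof
    assume "\<exists>s. \<forall>n. s n \<in> S \<and> mless (s n) (s (Suc n))"
    then obtain s where s: "\<forall>n. s n \<in> S \<and> mless (s n) (s (Suc n))" by blast
    then obtain k where "\<forall>n. mle (s n) (s k)"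
      using max[rule_format, of "range s"] by blast
    then show False using s lex.not_le by blast
  qed
qed

lemma wellbased_has_max:
  "wellbased S \<Longrightarrow> S \<noteq> {} \<Longrightarrow> \<exists>M\<in>S. \<forall>s\<in>S. mle s M"
  by (simp add: wellbased_iff_max)

lemma wellbased_subset: "wellbased S \<Longrightarrow> T \<subseteq> S \<Longrightarrow> wellbased T"
  unfolding wellbased_def by blast

lemma wellbased_finite: "finite S \<Longrightarrow> wellbased S"
  unfolding wellbased_iff_max
  by (metis finite_subset lex.Max_ge lex.Max_in)

lemma wellbased_bounded:
  assumes "wellbased S"
  obtains M where "\<forall>s\<in>S. mle s M"
  using wellbased_has_max[OF assms] by (cases "S = {}") auto

lemma wellbased_nonincreasing_subseq:
  fixes r :: "nat \<Rightarrow> 'o::wellorder lexp"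
  assumes wb: "wellbased S" and r: "\<forall>n. r n \<in> S"
  obtains \<phi> where "strict_mono \<phi>" "\<forall>n. mle (r (\<phi> (Suc n))) (r (\<phi> n))"
proof -
  have "\<exists>j\<ge>k. \<forall>i\<ge>k. mle (r i) (r j)" for k
    using wellbased_has_max[OF wellbased_subset[OF wb], of "r ` {k..}"] r by auto
  then obtain tail_max where tail_max: "\<forall>k. tail_max k \<ge> k \<and> (\<forall>i\<ge>k. mle (r i) (r (tail_max k)))"
    by metis
  define \<phi> where "\<phi> = rec_nat (tail_max 0) (\<lambda>_ p. tail_max (Suc p))"
  have \<phi>_Suc: "\<phi> (Suc n) = tail_max (Suc (\<phi> n))" for n by (simp add: \<phi>_def)
  have "strict_mono \<phi>"
    unfolding strict_mono_Suc_iff \<phi>_Suc using tail_max by (metis Suc_le_lessD)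
  moreover have "\<forall>i\<ge>\<phi> n. mle (r i) (r (\<phi> n))" for n
    using tail_max by (cases n) (auto simp: \<phi>_def \<phi>_Suc, meson Suc_leD le_trans)
  ultimately show ?thesis using that by (meson less_imp_le strict_mono_Suc_iff)
qed

lemma mle_if_pointwise_le:
  assumes "\<forall>c. r c \<le> s c" shows "mle r s"
proof (cases "r = s")
  case False
  then have "\<exists>c. r c \<noteq> s c" by (auto simp: fun_eq_iff)
  then have "r (LEAST c. r c \<noteq> s c) < s (LEAST c. r c \<noteq> s c)"
    using LeastI_ex[of "\<lambda>c. r c \<noteq> s c"] assms by (simp add: order_less_le)
  with False show ?thesis by (simp add: mle_def mless_def)
qed (simp add: mle_def)

definition ones_upto :: "'o::wellorder \<Rightarrow> 'o lexp" where
  "ones_upto b = (\<lambda>c. if c \<le> b then 1 else 0)"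

lemma ones_upto_mono: "b \<le> b' \<Longrightarrow> mle (ones_upto b) (ones_upto b')"
  by (rule mle_if_pointwise_le) (auto simp: ones_upto_def)

lemma wellbased_shifted_by_ones_upto:
  assumes wb: "wellbased S"
  shows "wellbased {r - ones_upto b |r b. r \<in> S}"
  unfolding wellbased_def
proof
  \<comment> \<open>Along a subsequence the r-parts do not increase; where b is least, the next term is no larger.\<close>
  assume "\<exists>s. \<forall>n. s n \<in> {r - ones_upto b |r b. r \<in> S} \<and> mless (s n) (s (Suc n))"
  then obtain s R B where s: "\<forall>n. mless (s n) (s (Suc n))"
    and RB: "\<forall>n. R n \<in> S \<and> s n = R n - ones_upto (B n)"
    by simp metis
  obtain \<phi> where \<phi>: "strict_mono \<phi>" "\<forall>n. mle (R (\<phi> (Suc n))) (R (\<phi> n))"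
    using wellbased_nonincreasing_subseq[OF wb] RB by metis
  obtain i where i: "\<forall>n. B (\<phi> i) \<le> B (\<phi> n)"
    using LeastI_ex[of "\<lambda>\<beta>. \<exists>n. B (\<phi> n) = \<beta>"] Least_le[of "\<lambda>\<beta>. \<exists>n. B (\<phi> n) = \<beta>"] by metis
  have "mle (s (\<phi> (Suc i))) (s (\<phi> i))"
    using RB \<phi>(2) lex.diff_mono ones_upto_mono i by metis
  moreover have "mless (s (\<phi> i)) (s (\<phi> (Suc i)))"
    using lex.lift_Suc_mono_less[of s] s \<phi>(1) by (simp add: strict_mono_Suc_iff)
  ultimately show False by (simp add: lex.not_le[symmetric])
qed

lemma fsum_nonzeroD: "fsum F q \<noteq> 0 \<Longrightarrow> \<exists>i. F i q \<noteq> 0"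
  by (rule ccontr) (simp add: fsum_def)

lemma fsum_apply_eq_sum:
  assumes "finite K" "{i. F i q \<noteq> 0} \<subseteq> K"
  shows "fsum F q = (\<Sum>i\<in>K. F i q)"
  unfolding fsum_def by (rule sum.mono_neutral_left) (use assms in auto)

lemma der_nonzeroD:
  assumes "der u m \<noteq> 0"
  obtains r b where "u r \<noteq> 0" "r b \<noteq> 0" "m = r - ones_upto b"
proof -
  obtain i where "(\<lambda>(r, b). sscale (u r * r b) (smono (\<lambda>c. r c - (if c \<le> b then 1 else 0)))) i m \<noteq> 0"
    using fsum_nonzeroD assms unfolding der_def by blast
  moreover obtain r b where "i = (r, b)" by fastforce
  ultimately have "sscale (u r * r b) (smono (\<lambda>c. r c - (if c \<le> b then 1 else 0))) m \<noteq> 0"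
    by simp
  then have "u r \<noteq> 0" "r b \<noteq> 0" "m = r - ones_upto b"
    by (auto simp: sscale_def smono_def ones_upto_def fun_eq_iff split: if_splits)
  then show ?thesis by (rule that)
qed

lemma inLlt_der:
  assumes "inLlt a u" shows "inLlt a (der u)"
proof -
  have supp: "supp u \<subseteq> {r. expbelow a r}" and wb: "wellbased (supp u)"
    using assms by (auto simp: inLlt_def)
  have "\<exists>r b. r \<in> supp u \<and> r b \<noteq> 0 \<and> m = r - ones_upto b" if "m \<in> supp (der u)" for m
    using that by (simp add: supp_def) (metis der_nonzeroD)
  moreover have "expbelow a (r - ones_upto b)" if r: "r \<in> supp u" "r b \<noteq> 0" for r b
    unfolding expbelow_def
  proof (intro allI impI)
    fix c assume "(r - ones_upto b) c \<noteq> 0"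
    then have "r c \<noteq> 0 \<or> c \<le> b" by (auto simp: ones_upto_def split: if_splits)
    moreover have "\<forall>c. r c \<noteq> 0 \<longrightarrow> c < a" using supp r(1) by (auto simp: expbelow_def)
    ultimately show "c < a" using r(2) le_less_trans by blast
  qed
  ultimately have "supp (der u) \<subseteq> {r. expbelow a r}"
    and "supp (der u) \<subseteq> {r - ones_upto b |r b. r \<in> supp u}"
    by blast+
  then show ?thesis
    using wellbased_subset[OF wellbased_shifted_by_ones_upto[OF wb]] by (auto simp: inLlt_def)
qed

lemma inL_der: "inL u \<Longrightarrow> inL (der u)"
  by (auto simp: inL_def intro: inLlt_der)

lemma inL_if_supp_subset_summable:
  assumes "summable_fam H" "supp u \<subseteq> (\<Union>i. supp (H i))"
  shows "inL u"
proof -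
  obtain a where "\<forall>i. supp (H i) \<subseteq> {r. expbelow a r}" "wellbased (\<Union>i. supp (H i))"
    using assms(1) by (auto simp: summable_fam_def)
  then show ?thesis
    using assms(2) wellbased_subset unfolding inL_def inLlt_def by blast
qed

lemma summable_fam_bounded:
  assumes "summable_fam H"
  obtains M where "\<forall>i s. H i s \<noteq> 0 \<longrightarrow> mle s M"
proof -
  have "wellbased (\<Union>i. supp (H i))" using assms by (simp add: summable_fam_def)
  then obtain M where "\<forall>s\<in>(\<Union>i. supp (H i)). mle s M" by (rule wellbased_bounded)
  then show ?thesis using that by (auto simp: supp_def)
qed

lemma smult_apply:
  "smult u v q = (\<Sum>a | u a \<noteq> 0 \<and> v (q - a) \<noteq> 0. u a * v (q - a))"
  by (simp add: smult_def fun_diff_def)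

lemma smult_nonzeroD:
  assumes "smult u v q \<noteq> 0" shows "\<exists>a. u a \<noteq> 0 \<and> v (q - a) \<noteq> 0"
proof (rule ccontr)
  assume "\<not> ?thesis"
  then have "{a. u a \<noteq> 0 \<and> v (q - a) \<noteq> 0} = {}" by blast
  with assms show False by (simp add: smult_apply)
qed

lemma smult_cong_shifted:
  assumes "\<And>a. u a \<noteq> 0 \<Longrightarrow> v (p - a) = w (q - a)"
  shows "smult u v p = smult u w q"
proof -
  have "{a. u a \<noteq> 0 \<and> v (p - a) \<noteq> 0} = {a. u a \<noteq> 0 \<and> w (q - a) \<noteq> 0}"
    using assms by auto
  then show ?thesis unfolding smult_apply by (auto intro: sum.cong simp: assms)
qed

lemma smult_smono_right: "smult u (smono s) q = u (q - s)"
proof -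
  have "{a. u a \<noteq> 0 \<and> smono s (q - a) \<noteq> 0} = (if u (q - s) \<noteq> 0 then {q - s} else {})"
    by (auto simp: smono_def)
  then show ?thesis unfolding smult_apply by (auto simp: smono_def)
qed

lemma sconst_one_eq_smono: "sconst 1 = smono 0"
  by (auto simp: sconst_def smono_def fun_eq_iff)

lemma smult_sconst_one: "smult u (sconst 1) = u"
  by (simp add: sconst_one_eq_smono smult_smono_right fun_eq_iff)

lemma spow_0 [simp]: "spow f 0 = sconst 1"
  by (simp add: spow_def)

lemma spow_Suc: "spow f (Suc n) = smult f (spow f n)"
  by (simp add: spow_def)

lemma spow_smono: "spow (smono e) n = smono (of_nat n * e)"
proof (induction n)
  case (Suc n)
  have shift: "(q - of_nat n * e = e) \<longleftrightarrow> (q = of_nat (Suc n) * e)" for q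
    by (auto simp: algebra_simps)
  have "smult (smono e) (smono (of_nat n * e)) q = smono (of_nat (Suc n) * e) q" for q
    unfolding smult_smono_right by (simp only: smono_def shift)
  then have "smult (smono e) (smono (of_nat n * e)) = smono (of_nat (Suc n) * e)" ..
  then show ?case unfolding spow_Suc Suc.IH .
qed (simp add: sconst_one_eq_smono zero_fun_def)

lemma spow_sconst_one: "spow (sconst 1) n = sconst 1"
  using spow_smono[of 0 n] by (simp add: sconst_one_eq_smono)

lemma smult_support_bound:
  assumes "\<forall>a. u a \<noteq> 0 \<longrightarrow> mle a U" "\<forall>q. v q \<noteq> 0 \<longrightarrow> mle q B" "smult u v q \<noteq> 0"
  shows "mle q (U + B)"
proof -
  obtain a where "u a \<noteq> 0" "v (q - a) \<noteq> 0" using smult_nonzeroD[OF assms(3)] by blast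
  then have "mle (a + (q - a)) (U + B)" using assms(1,2) lex.add_mono by blast
  then show ?thesis by simp
qed

lemma spow_support_bound:
  assumes "\<forall>q. d q \<noteq> 0 \<longrightarrow> mle q B"
  shows "spow d n q \<noteq> 0 \<Longrightarrow> mle q (of_nat n * B)"
proof (induction n arbitrary: q)
  case 0
  then show ?case by (auto simp: sconst_def mle_def split: if_splits)
next
  case (Suc n)
  have "mle q (B + of_nat n * B)"
    using smult_support_bound[OF assms] Suc unfolding spow_Suc by blast
  moreover have "of_nat (Suc n) * B = B + of_nat n * B"
    by (simp add: distrib_right)
  ultimately show ?case by (simp only:)
qed

lemma of_nat_mult_nonpos:
  assumes "mle e 0" shows "mle (of_nat k * e) 0"
proof (induction k)
  case (Suc k)
  have "of_nat (Suc k) * e = e + of_nat k * e"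
    by (simp add: distrib_right)
  then show ?case using lex.add_nonpos_nonpos[OF assms Suc.IH] by (simp only:)
qed (simp add: mle_def)

lemma of_nat_mult_antimono:
  assumes "mle e 0" "m \<le> n"
  shows "mle (of_nat n * e) (of_nat m * e)"
proof -
  have "of_nat n * e = of_nat (n - m) * e + of_nat m * e"
    using assms(2) by (simp add: of_nat_diff left_diff_distrib)
  moreover have "mle (of_nat (n - m) * e + of_nat m * e) (0 + of_nat m * e)"
    by (rule lex.add_right_mono) (rule of_nat_mult_nonpos[OF assms(1)])
  ultimately show ?thesis by (metis add_0_left)
qed

definition ord_least :: "'o::wellorder" where
  "ord_least = (LEAST b. True)"

lemma mless_if_ord_least_less:
  fixes r s :: "'o::wellorder lexp"
  assumes "r ord_least < s ord_least" shows "mless r s"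
proof -
  have "\<not> c < ord_least" for c :: 'o
    using not_less_Least[of c "\<lambda>_. True"] unfolding ord_least_def by blast
  with assms show ?thesis unfolding mless_iff_first_difference by blast
qed

definition x_exp :: "'o::wellorder lexp" where
  "x_exp = (\<lambda>b. if b = ord_least then 1 else 0)"

lemma xL_eq_smono: "xL = smono x_exp"
  unfolding xL_def ell_def x_exp_def ord_least_def ..

lemma mless_0_x_exp: "mless 0 x_exp"
  by (rule mless_if_ord_least_less) (simp add: x_exp_def)

lemma dexp_eqI:
  assumes "u r \<noteq> 0" "\<forall>s. u s \<noteq> 0 \<longrightarrow> mle s r"
  shows "dexp u = r"
  unfolding dexp_def
proof (rule the_equality)
  show "u r \<noteq> 0 \<and> (\<forall>s. u s \<noteq> 0 \<longrightarrow> s = r \<or> mless s r)"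
    using assms by (simp add: mle_def)
next
  fix r' assume "u r' \<noteq> 0 \<and> (\<forall>s. u s \<noteq> 0 \<longrightarrow> s = r' \<or> mless s r')"
  then show "r' = r" using assms mless_asym by (auto simp: mle_def)
qed

lemma dexp_greatest:
  assumes "wellbased (supp u)" "u \<noteq> (\<lambda>_. 0)"
  shows "u (dexp u) \<noteq> 0" "\<forall>s. u s \<noteq> 0 \<longrightarrow> mle s (dexp u)"
proof -
  obtain M where "M \<in> supp u" "\<forall>s\<in>supp u. mle s M"
    using wellbased_has_max[OF assms(1)] assms(2) by (auto simp: supp_def)
  moreover from this have "dexp u = M" by (intro dexp_eqI) (auto simp: supp_def)
  ultimately show "u (dexp u) \<noteq> 0" "\<forall>s. u s \<noteq> 0 \<longrightarrow> mle s (dexp u)"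
    by (auto simp: supp_def)
qed

lemma sprec_if_supp_bounded:
  assumes "wellbased (supp h)" "\<forall>q. h q \<noteq> 0 \<longrightarrow> mle q B"
    and "g \<noteq> (\<lambda>_. 0)" "mless B (dexp g)"
  shows "sprec h g"
proof (cases "h = (\<lambda>_. 0)")
  case False
  then have "mle (dexp h) B" using dexp_greatest[OF assms(1)] assms(2) by blast
  then show ?thesis using assms(3,4) lex.le_less_trans by (auto simp: sprec_def)
qed (use assms(3) in \<open>simp add: sprec_def\<close>)

lemma sgtR_has_infinite_monomial:
  assumes "sgtR g" shows "\<exists>s. g s \<noteq> 0 \<and> mless 0 s"
proof (rule ccontr)
  assume "\<not> ?thesis"
  then have below: "\<forall>s. g s \<noteq> 0 \<longrightarrow> mle s 0" using lex.not_less by blast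
  define z where "z = ssub g (sconst (g 0 + 1))"
  have z0: "z 0 = -1" by (simp add: z_def ssub_def sconst_def zero_fun_def)
  moreover have "\<forall>s. z s \<noteq> 0 \<longrightarrow> mle s 0"
    using below by (auto simp: z_def ssub_def sconst_def zero_fun_def mle_def)
  ultimately have "dexp z = 0" by (intro dexp_eqI) auto
  moreover have "spos z" using assms by (simp add: sgtR_def z_def)
  ultimately show False using z0 by (simp add: spos_def)
qed

lemma sgtR_dexp_pos:
  assumes "inL g" "sgtR g"
  shows "g \<noteq> (\<lambda>_. 0)" "mless 0 (dexp g)"
proof -
  obtain s where s: "g s \<noteq> 0" "mless 0 s" using sgtR_has_infinite_monomial[OF assms(2)] by blast
  then show g0: "g \<noteq> (\<lambda>_. 0)" by auto
  have "wellbased (supp g)" using assms(1) by (auto simp: inL_def inLlt_def)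
  then have "mle s (dexp g)" using dexp_greatest g0 s(1) by blast
  then show "mless 0 (dexp g)" using s(2) lex.less_le_trans by blast
qed

lemma sgtR_if_leading_x:
  assumes "w x_exp = 1" "\<forall>s. s \<noteq> x_exp \<longrightarrow> w s \<noteq> 0 \<longrightarrow> mless s x_exp"
  shows "sgtR w"
  unfolding sgtR_def
proof
  fix c
  let ?z = "ssub w (sconst c)"
  have "x_exp \<noteq> (\<lambda>_. 0)" using mless_0_x_exp mless_irrefl unfolding zero_fun_def by metis
  then have "?z x_exp = 1" using assms(1) by (auto simp: ssub_def sconst_def)
  moreover have "\<forall>s. ?z s \<noteq> 0 \<longrightarrow> mle s x_exp"
    using assms(2) mless_0_x_exp by (auto simp: ssub_def sconst_def mle_def zero_fun_def split: if_splits)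
  ultimately have "dexp ?z = x_exp" by (intro dexp_eqI) auto
  with \<open>?z x_exp = 1\<close> show "spos ?z" by (auto simp: spos_def)
qed

lemma sgtR_xL: "sgtR xL"
  by (rule sgtR_if_leading_x) (auto simp: xL_eq_smono smono_def)

lemma inL_finite_supp: "finite (supp f) \<Longrightarrow> supp f \<subseteq> {r. expbelow a r} \<Longrightarrow> inL f"
  by (auto simp: inL_def inLlt_def wellbased_finite)

lemma supp_smono: "supp (smono e) = {e}"
  by (auto simp: supp_def smono_def)

lemma inL_smono_iff: "inL (smono e) \<longleftrightarrow> (\<exists>a. expbelow a e)"
  by (auto simp: inL_def inLlt_def supp_smono wellbased_finite)

lemma inL_sconst_one: "inL (sconst 1)"
  by (rule inL_finite_supp) (auto simp: sconst_def supp_def expbelow_def)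

lemma sprec_if_supp_neg:
  assumes "inL g" "sgtR g" "inL d" "\<forall>q. d q \<noteq> 0 \<longrightarrow> mle q B" "mless B 0"
  shows "sprec d g"
  using assms sgtR_dexp_pos[OF assms(1,2)] lex.less_trans
  by (intro sprec_if_supp_bounded[where B = B]) (auto simp: inL_def inLlt_def)

definition taylor_term ::
    "('o::wellorder ser \<Rightarrow> 'o ser \<Rightarrow> 'o ser) \<Rightarrow> 'o ser \<Rightarrow> 'o ser \<Rightarrow> 'o ser \<Rightarrow> nat \<Rightarrow> 'o ser" where
  "taylor_term cmp f g h n = sscale (1 / fact n) (smult (cmp ((der ^^ n) f) g) (spow h n))"

lemma taylor_term_0: "taylor_term cmp f g h 0 = cmp f g"
  by (simp add: taylor_term_def sscale_def smult_sconst_one)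

lemma taylor_term_1: "taylor_term cmp f g h 1 = smult (cmp (der f) g) h"
  by (simp add: taylor_term_def sscale_def spow_Suc smult_sconst_one)

lemma taylor_term_vanishes:
  assumes "\<forall>a. cmp ((der ^^ n) f) g a \<noteq> 0 \<longrightarrow> mle a U" "\<forall>q. h q \<noteq> 0 \<longrightarrow> mle q B"
    and "mless (U + of_nat n * B) p"
  shows "taylor_term cmp f g h n p = 0"
proof (rule ccontr)
  assume "taylor_term cmp f g h n p \<noteq> 0"
  then have "smult (cmp ((der ^^ n) f) g) (spow h n) p \<noteq> 0"
    by (simp add: taylor_term_def sscale_def)
  then have "mle p (U + of_nat n * B)"
    using smult_support_bound[OF assms(1)] spow_support_bound[OF assms(2)] by blast
  then show False using assms(3) lex.not_less by blast
qed

locale taylor_composition =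
  fixes cmp :: "'o::wellorder ser \<Rightarrow> 'o ser \<Rightarrow> 'o ser"
  assumes composition: "composition cmp"
    and taylor: "admits_taylor cmp"
    and inL_xL: "inL (xL :: 'o ser)"
begin

lemma inL_cmp: "inL f \<Longrightarrow> inL g \<Longrightarrow> sgtR g \<Longrightarrow> inL (cmp f g)"
  using composition by (simp add: composition_def)

lemma cmp_xL: "inL f \<Longrightarrow> cmp f xL = f"
  using composition by (simp add: composition_def)

lemma cmp_assoc:
  "inL f \<Longrightarrow> inL g \<Longrightarrow> sgtR g \<Longrightarrow> inL h \<Longrightarrow> sgtR h \<Longrightarrow> cmp (cmp f g) h = cmp f (cmp g h)"
  using composition by (simp add: composition_def)

lemma taylor_expansion:
  assumes "inL f" "inL g" "sgtR g" "inL h" "sprec h g"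
  shows "summable_fam (taylor_term cmp f g h)" "fsum (taylor_term cmp f g h) = cmp f (sadd g h)"
  using taylor assms unfolding admits_taylor_def taylor_term_def[abs_def] Let_def by blast+

lemma composite_derivatives_bounded:
  assumes "inL f" "inL g" "sgtR g"
  obtains U where "\<forall>n a. cmp ((der ^^ n) f) g a \<noteq> 0 \<longrightarrow> mle a U"
proof -
  \<comment> \<open>The Taylor family for the increment 1 is summable, hence has well-based total support.\<close>
  have "sprec (sconst 1) g"
    using sgtR_dexp_pos[OF assms(2,3)] inL_sconst_one
    by (intro sprec_if_supp_bounded[where B = 0]) (auto simp: sconst_def inL_def inLlt_def mle_def zero_fun_def)
  then have "summable_fam (taylor_term cmp f g (sconst 1))"
    using taylor_expansion assms inL_sconst_one by blast
  moreover have "taylor_term cmp f g (sconst 1) n a \<noteq> 0 \<longleftrightarrow> cmp ((der ^^ n) f) g a \<noteq> 0" for n a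
    by (simp add: taylor_term_def spow_sconst_one smult_sconst_one sscale_def)
  ultimately show ?thesis using that summable_fam_bounded by metis
qed

lemma taylor_increment_nonzeroD:
  assumes "inL f" "inL g" "sgtR g" "inL d" "sprec d g" "cmp f (sadd g d) q \<noteq> cmp f g q"
  shows "\<exists>n>0. taylor_term cmp f g d n q \<noteq> 0"
proof (rule ccontr)
  assume "\<not> ?thesis"
  then have "fsum (taylor_term cmp f g d) q = (\<Sum>n\<in>{0}. taylor_term cmp f g d n q)"
    by (intro fsum_apply_eq_sum) auto
  then show False using taylor_expansion(2)[OF assms(1-5)] assms(6) by (simp add: taylor_term_0)
qed

lemma inL_taylor_increment:
  assumes "inL f" "inL g" "sgtR g" "inL d" "sprec d g"
  shows "inL (ssub (cmp f (sadd g d)) (cmp f g))"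
proof (rule inL_if_supp_subset_summable[OF taylor_expansion(1)[OF assms]], rule subsetI)
  fix q assume "q \<in> supp (ssub (cmp f (sadd g d)) (cmp f g))"
  then have "cmp f (sadd g d) q \<noteq> cmp f g q" by (simp add: supp_def ssub_def)
  then obtain n where "taylor_term cmp f g d n q \<noteq> 0"
    using taylor_increment_nonzeroD[OF assms] by blast
  then show "q \<in> (\<Union>n. supp (taylor_term cmp f g d n))" by (auto simp: supp_def)
qed

lemma taylor_increment_supp:
  assumes "inL f" "inL g" "sgtR g" "inL d" "sprec d g"
    and U: "\<forall>n a. cmp ((der ^^ n) f) g a \<noteq> 0 \<longrightarrow> mle a U"
    and B: "\<forall>q. d q \<noteq> 0 \<longrightarrow> mle q B" "mle B 0"
    and "cmp f (sadd g d) q \<noteq> cmp f g q"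
  shows "mle q (U + B)"
proof -
  obtain n where n: "n > 0" "taylor_term cmp f g d n q \<noteq> 0"
    using taylor_increment_nonzeroD assms(1-5,9) by blast
  have "\<not> mless (U + of_nat n * B) q"
  proof
    assume "mless (U + of_nat n * B) q"
    then have "taylor_term cmp f g d n q = 0"
      using U B(1) by (intro taylor_term_vanishes) auto
    with n(2) show False by contradiction
  qed
  then have "mle q (U + of_nat n * B)" by (simp only: lex.not_less)
  also have "mle (U + of_nat n * B) (U + of_nat 1 * B)"
    using n(1) by (intro lex.add_left_mono of_nat_mult_antimono B(2)) simp
  finally show ?thesis by (simp only: of_nat_1 mult_1_left)
qed

lemma taylor_first_order:
  assumes "inL f" "inL g" "sgtR g" "inL d" "sprec d g"
    and U: "\<forall>n a. cmp ((der ^^ n) f) g a \<noteq> 0 \<longrightarrow> mle a U"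
    and B: "\<forall>q. d q \<noteq> 0 \<longrightarrow> mle q B" "mle B 0"
    and q: "mless (U + B + B) q"
  shows "cmp f (sadd g d) q = cmp f g q + smult (cmp (der f) g) d q"
proof -
  let ?T = "taylor_term cmp f g d"
  have higher_terms_vanish: "?T n q = 0" if "n \<ge> 2" for n
  proof (rule taylor_term_vanishes[OF _ B(1)])
    have "mle (U + of_nat n * B) (U + of_nat 2 * B)"
      using that by (intro lex.add_left_mono of_nat_mult_antimono B(2))
    moreover have "U + of_nat 2 * B = U + B + B" by (simp add: algebra_simps)
    ultimately show "mless (U + of_nat n * B) q" using q lex.le_less_trans by metis
  qed (use U in blast)
  have "{n. ?T n q \<noteq> 0} \<subseteq> {0, 1}"
  proof
    fix n assume "n \<in> {n. ?T n q \<noteq> 0}"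
    then have "n < 2" using higher_terms_vanish not_le by blast
    then show "n \<in> {0, 1}" by auto
  qed
  then have "fsum ?T q = (\<Sum>n\<in>{0, 1}. ?T n q)" by (intro fsum_apply_eq_sum) simp_all
  then show ?thesis
    using taylor_expansion(2)[OF assms(1-5)]
    by (simp add: taylor_term_0 taylor_term_1[unfolded One_nat_def])
qed

lemma exists_monomial_below:
  assumes "finite Z"
  obtains e :: "'o lexp" where "inL (smono e)" "\<forall>z\<in>Z. mless e z"
proof -
  define K where "K = 1 + (\<Sum>z\<in>Z. \<bar>z ord_least\<bar>)"
  define e :: "'o lexp" where "e = (\<lambda>b. - K * x_exp b)"
  have "mless e z" if "z \<in> Z" for z
  proof (rule mless_if_ord_least_less)
    have "\<bar>z ord_least\<bar> \<le> (\<Sum>z\<in>Z. \<bar>z ord_least\<bar>)"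
      using assms that by (intro member_le_sum) auto
    then show "e ord_least < z ord_least" by (simp add: e_def x_exp_def K_def)
  qed
  moreover obtain a :: 'o where "expbelow a x_exp"
    using inL_xL unfolding xL_eq_smono inL_smono_iff by blast
  then have "expbelow a e" by (simp add: expbelow_def e_def)
  ultimately show ?thesis using that inL_smono_iff by blast
qed

context
  fixes e :: "'o lexp"
  assumes e: "inL (smono e)" "mless e 0"
begin

lemma smono_supp_le: "\<forall>q. smono e q \<noteq> 0 \<longrightarrow> mle q e"
  by (simp add: smono_def mle_def)

lemma sprec_smono_xL: "sprec (smono e) xL"
  using sprec_if_supp_neg[OF inL_xL sgtR_xL e(1) smono_supp_le e(2)] .

lemma
  shows inL_x_plus_monomial: "inL (sadd xL (smono e))"
    and sgtR_x_plus_monomial: "sgtR (sadd xL (smono e))"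
proof -
  have "mless e x_exp" using e(2) mless_0_x_exp by (rule lex.less_trans)
  then have "e \<noteq> x_exp" using mless_irrefl by blast
  obtain a b :: 'o where "expbelow a x_exp" "expbelow b e"
    using inL_xL e(1) unfolding inL_smono_iff xL_eq_smono by blast
  then have "expbelow (max a b) x_exp" "expbelow (max a b) e"
    by (auto simp: expbelow_def less_max_iff_disj)
  moreover have "supp (sadd xL (smono e)) \<subseteq> {x_exp, e}"
    by (auto simp: supp_def sadd_def xL_eq_smono smono_def)
  ultimately show "inL (sadd xL (smono e))"
    by (intro inL_finite_supp[where a = "max a b"]) (auto intro: finite_subset)
  show "sgtR (sadd xL (smono e))"
    using \<open>e \<noteq> x_exp\<close> \<open>mless e x_exp\<close>
    by (intro sgtR_if_leading_x) (auto simp: sadd_def xL_eq_smono smono_def)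
qed

lemma x_plus_monomial_first_order:
  assumes u: "inL u" and V: "\<forall>n a. cmp ((der ^^ n) u) xL a \<noteq> 0 \<longrightarrow> mle a V"
    and "mless (V + e + e) q"
  shows "cmp u (sadd xL (smono e)) q = u q + der u (q - e)"
  using taylor_first_order[OF u inL_xL sgtR_xL e(1) sprec_smono_xL V smono_supp_le]
    lex.less_imp_le[OF e(2)] assms(3) by (simp add: cmp_xL u inL_der smult_smono_right)

lemma x_plus_monomial_increment:
  assumes g: "inL g" "sgtR g" and V: "\<forall>n a. cmp ((der ^^ n) g) xL a \<noteq> 0 \<longrightarrow> mle a V"
    and Ve: "mless (V + e) 0"
  defines "d \<equiv> ssub (cmp g (sadd xL (smono e))) g"
  shows "inL d" "\<forall>q. d q \<noteq> 0 \<longrightarrow> mle q (V + e)" "sprec d g"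
    and "mless (V + e + e) q \<Longrightarrow> d q = der g (q - e)"
proof -
  show d: "inL d"
    using inL_taylor_increment[OF g(1) inL_xL sgtR_xL e(1) sprec_smono_xL]
    by (simp add: d_def cmp_xL g(1))
  show d_supp: "\<forall>q. d q \<noteq> 0 \<longrightarrow> mle q (V + e)"
    using taylor_increment_supp[OF g(1) inL_xL sgtR_xL e(1) sprec_smono_xL V smono_supp_le]
      lex.less_imp_le[OF e(2)] by (auto simp: d_def ssub_def cmp_xL g(1))
  show "sprec d g" using sprec_if_supp_neg[OF g d d_supp Ve] .
  show "mless (V + e + e) q \<Longrightarrow> d q = der g (q - e)"
    using x_plus_monomial_first_order[OF g(1) V] by (simp add: d_def ssub_def)
qed

end

lemma chain_rule_coefficient:
  assumes f: "inL f" and g: "inL g" "sgtR g"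
  shows "der (cmp f g) m = smult (cmp (der f) g) (der g) m"
proof -
  define F where "F = cmp f g"
  have F: "inL F" unfolding F_def using f g by (rule inL_cmp)
  obtain U where U: "\<forall>n a. cmp ((der ^^ n) f) g a \<noteq> 0 \<longrightarrow> mle a U"
    using composite_derivatives_bounded[OF f g] .
  obtain V where V: "\<forall>n a. cmp ((der ^^ n) g) xL a \<noteq> 0 \<longrightarrow> mle a V"
    using composite_derivatives_bounded[OF g(1) inL_xL sgtR_xL] .
  obtain W where W: "\<forall>n a. cmp ((der ^^ n) F) xL a \<noteq> 0 \<longrightarrow> mle a W"
    using composite_derivatives_bounded[OF F inL_xL sgtR_xL] .
  \<comment> \<open>Each bound below makes the higher Taylor terms vanish in one of the expansions used.\<close>
  obtain e where e: "inL (smono e)"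
    and small: "\<forall>z\<in>{0, - V, m - W, m - U - V, m - U - V - V}. mless e z"
    using exists_monomial_below[of "{0, - V, m - W, m - U - V, m - U - V - V}"] by blast
  have e0: "mless e 0" using small by simp
  have Ve: "mless (V + e) 0"
    by (rule mless_if_same_diff[where c = e and d = "- V"]) (use small in auto)
  define X where "X = sadd xL (smono e)"
  define d where "d = ssub (cmp g X) g"
  note d_facts = x_plus_monomial_increment[OF e e0 g V Ve, folded X_def, folded d_def]
  define p where "p = m + e"
  have "mless (W + e + e) p"
    by (rule mless_if_same_diff[where c = e and d = "m - W"]) (use small in \<open>auto simp: p_def\<close>)
  then have outer: "cmp F X p = F p + der F m"
    using x_plus_monomial_first_order[OF e e0 F W] by (simp add: X_def p_def)
  have assoc: "cmp F X = cmp f (sadd g d)"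
    unfolding F_def d_def X_def
    using cmp_assoc f g inL_x_plus_monomial sgtR_x_plus_monomial e e0 by (simp add: sadd_def ssub_def)
  have "mless (U + (V + e) + (V + e)) p"
    by (rule mless_if_same_diff[where c = e and d = "m - U - V - V"]) (use small in \<open>auto simp: p_def\<close>)
  then have inner: "cmp f (sadd g d) p = F p + smult (cmp (der f) g) d p"
    using taylor_first_order[OF f g d_facts(1,3) U d_facts(2) lex.less_imp_le[OF Ve]] by (simp add: F_def)
  have "smult (cmp (der f) g) d p = smult (cmp (der f) g) (der g) m"
  proof (rule smult_cong_shifted)
    fix a assume "cmp (der f) g a \<noteq> 0"
    then have "mle a U" using U[rule_format, of 1] by simp
    moreover have "mless e (m - U - V)" using small by simp
    ultimately have "mless e (m - a - V)"
      using lex.diff_left_mono lex.diff_right_mono lex.less_le_trans by metis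
    then have "mless (V + e + e) (p - a)"
      by (rule mless_if_same_diff[rotated]) (simp add: p_def)
    then show "d (p - a) = der g (m - a)" using d_facts(4) by (simp add: p_def)
  qed
  with outer assoc inner show ?thesis by (simp add: F_def)
qed

end

theorem lemma9p2:
  fixes cmp :: "'o::wellorder ser \<Rightarrow> 'o ser \<Rightarrow> 'o ser"
  assumes "\<forall>a::'o. \<exists>b. a < b"
    and "composition cmp"
    and "admits_taylor cmp"
  shows "\<forall>f g. inL f \<and> inL g \<and> sgtR g \<longrightarrow> der (cmp f g) = smult (cmp (der f) g) (der g)"
proof -
  obtain a :: 'o where "ord_least < a" using assms(1) by blast
  then have "inL (xL :: 'o ser)"
    unfolding xL_eq_smono inL_smono_iff by (auto simp: expbelow_def x_exp_def)
  then interpret taylor_composition cmp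
    using assms(2,3) by unfold_locales
  show ?thesis using chain_rule_coefficient by (intro allI impI ext) auto
qed

end
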